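(* Let $\langle\mathcal{D},\sigma,\varphi\rangle$ be a hybrid temporal achievement causal setting. Then $$\mathcal{D}\models \mathit{CausesDir}^{\mathit{prim}}_{\mathit{temp}}(a_1,ts_1,\varphi,\sigma)\land\mathit{CausesDir}^{\mathit{prim}}_{\mathit{temp}}(a_2,ts_2,\varphi,\sigma)\supset a_1=a_2\land ts_1=ts_2$$ (free variables universally quantified).
   Context: Hybrid temporal situation calculus (HTSC): $S_0$ initial situation, $do(a,s)$ successor situation, $do([a_1,\dots,a_n],s)$ the nesting. $s\sqsubset s'$: $s'$ reachable from $s$ by one or more actions; $s\sqsubseteq s'$: $s\sqsubset s'\lor s=s'$. $\mathit{time}(a(\vec x,t))=t$, $\mathit{start}(do(a,s))=\mathit{time}(a)$. $\mathit{Exec}(s)\doteq\forall a,s'.(do(a,s')\sqsubseteq s\supset\mathit{Poss}(a,s')\land\mathit{start}(s')\le\mathit{time}(a))$; $s<s'$ abbreviates $s\sqsubset s'\land\mathit{Exec}(s')$; $s\le s'$ abbreviates $s<s'\lor s=s'$. $\mathit{timeStamp}(S_0)=0$, $\mathit{timeStamp}(do(a,s))=\mathit{timeStamp}(s)+1$. A hybrid basic action theory $\mathcal{D}$ contains initial-state, precondition, successor-state (discrete fluents), state evolution (temporal fluents), unique-names and foundational axioms. A temporal fluent $f$ has state evolution axiom $f(\vec x,t,s)=y\equiv[\bigvee_i(\gamma^f_i(\vec x,s)\land\delta_i(\vec x,y,t,s))\lor(y=f(\vec x,\mathit{start}(s),s)\land\neg\bigvee_i\gamma^f_i(\vec x,s))]$,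 where the contexts $\gamma_i^f$ are formulas over discrete fluents and are mutually exclusive (at most one holds in any situation). An effect $\varphi$ is a situation- and time-suppressed formula, uniform in the situation, constraining the value of one primitive temporal fluent $f$; $\varphi[t,s]$ restores time $t$ and situation $s$; for a situation-suppressed $\psi$, $\psi[s]$ restores $s$. $\mathit{CausesDir}(a,ts,\psi,s)\doteq\exists s_a.\,\mathit{timeStamp}(s_a)=ts\land(S_0<do(a,s_a)\le s)\land\neg\psi[s_a]\land\forall s'.(do(a,s_a)\le s'\le s\supset\psi[s'])$. $\mathit{end}(s',s)=\mathit{start}(s')$ if $s'=s$; $=\mathit{time}(a)$ if $do(a,s')\le s$. $\mathit{AchvSitAux}(s_\varphi,\varphi,s)\doteq\varphi[\mathit{end}(s_\varphi,s),s_\varphi]\land\forall s',t.(s_\varphi<s'\le s\land\mathit{start}(s')\le t\le\mathit{end}(s',s)\supset\varphi[t,s'])$; $\mathit{AchvSit}(s_\varphi,\varphi,s)\doteq\mathit{AchvSitAux}(s_\varphi,\varphi,s)\land\neg\exists s''.(s''<s_\varphi\land\mathit{AchvSitAux}(s'',\varphi,s))$. $\mathit{CausesDir}^{\mathit{prim}}_{\mathit{temp}}(a,ts,\varphi,s)\doteq\exists s_\varphi.\,\mathit{AchvSit}(s_\varphi,\varphi,s)\land\exists i.\,\mathit{CausesDir}(a,ts,\gamma^f_i,s_\varphi)$, where $f$ is the fluent in $\varphi$. Hybrid temporal achievement causal setting $\langle\mathcal{D},\sigma,\varphi\rangle$: $\sigma=do([\alpha_1,\dots,\alpha_n],S_0)$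 ground, $n\ge1$, and $\mathcal{D}\models\mathit{Exec}(\sigma)\land\neg\varphi[\mathit{start}(S_0),S_0]\land\neg\varphi[\mathit{time}(\alpha_1),S_0]\land\varphi[\mathit{start}(\sigma),\sigma]$. *)

theory Defs
  imports Main "HOL.Real"
begin

text \<open>
Semantic rendering of the hybrid temporal situation calculus (HTSC) in a fixed
model of a hybrid basic action theory.  By the foundational axioms of the
situation calculus, situations are isomorphic to finite sequences of actions;
we represent a situation as the list of actions performed since S0, in
chronological order.

Model parameters (interpretation of the symbols of D):
  Poss :: 'a => 'a list => bool     precondition predicate
  tm   :: 'a => real                time(a)
  st0  :: real                       start(S0)
\<close>

type_synonym 'a sit = "'a list"

definition S0 :: "'a sit" where
  "S0 = []"

definition do :: "'a \<Rightarrow> 'a sit \<Rightarrow> 'a sit" where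
  "do a s = s @ [a]"

fun do_list :: "'a list \<Rightarrow> 'a sit \<Rightarrow> 'a sit" where
  "do_list [] s = s"
| "do_list (a # as) s = do_list as (do a s)"

definition sprec :: "'a sit \<Rightarrow> 'a sit \<Rightarrow> bool" where
  "sprec s s' \<longleftrightarrow> (\<exists>as. as \<noteq> [] \<and> s' = s @ as)"

definition sprec_eq :: "'a sit \<Rightarrow> 'a sit \<Rightarrow> bool" where
  "sprec_eq s s' \<longleftrightarrow> sprec s s' \<or> s = s'"

definition start :: "real \<Rightarrow> ('a \<Rightarrow> real) \<Rightarrow> 'a sit \<Rightarrow> real" where
  "start st0 tm s = (if s = [] then st0 else tm (last s))"

definition Exec :: "('a \<Rightarrow> 'a sit \<Rightarrow> bool) \<Rightarrow> ('a \<Rightarrow> real) \<Rightarrow> real \<Rightarrow> 'a sit \<Rightarrow> bool" where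
  "Exec Poss tm st0 s \<longleftrightarrow>
     (\<forall>a s'. sprec_eq (do a s') s \<longrightarrow> Poss a s' \<and> start st0 tm s' \<le> tm a)"

definition slt :: "('a \<Rightarrow> 'a sit \<Rightarrow> bool) \<Rightarrow> ('a \<Rightarrow> real) \<Rightarrow> real \<Rightarrow> 'a sit \<Rightarrow> 'a sit \<Rightarrow> bool" where
  "slt Poss tm st0 s s' \<longleftrightarrow> sprec s s' \<and> Exec Poss tm st0 s'"

definition sle :: "('a \<Rightarrow> 'a sit \<Rightarrow> bool) \<Rightarrow> ('a \<Rightarrow> real) \<Rightarrow> real \<Rightarrow> 'a sit \<Rightarrow> 'a sit \<Rightarrow> bool" where
  "sle Poss tm st0 s s' \<longleftrightarrow> slt Poss tm st0 s s' \<or> s = s'"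

definition timeStamp :: "'a sit \<Rightarrow> nat" where
  "timeStamp s = length s"

text \<open>CausesDir(a, ts, psi, s); psi is a situation-suppressed formula, i.e. a predicate on situations.\<close>
definition CausesDir ::
  "('a \<Rightarrow> 'a sit \<Rightarrow> bool) \<Rightarrow> ('a \<Rightarrow> real) \<Rightarrow> real \<Rightarrow> 'a \<Rightarrow> nat \<Rightarrow> ('a sit \<Rightarrow> bool) \<Rightarrow> 'a sit \<Rightarrow> bool" where
  "CausesDir Poss tm st0 a ts \<psi> s \<longleftrightarrow>
     (\<exists>sa. timeStamp sa = ts \<and>
           slt Poss tm st0 S0 (do a sa) \<and> sle Poss tm st0 (do a sa) s \<and>
           \<not> \<psi> sa \<and>
           (\<forall>s'. sle Poss tm st0 (do a sa) s' \<and> sle Poss tm st0 s' s \<longrightarrow> \<psi> s'))"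

text \<open>end(s', s): start(s') if s' = s, and time(a) if do(a,s') \<le> s (then a is the
action following s' in s).  It is only meaningful when s' \<le> s; see AchvSitAux.\<close>
definition send :: "real \<Rightarrow> ('a \<Rightarrow> real) \<Rightarrow> 'a sit \<Rightarrow> 'a sit \<Rightarrow> real" where
  "send st0 tm s' s = (if s' = s then start st0 tm s' else tm (s ! length s'))"

text \<open>Effects phi are given as predicates phi t s, i.e. phi[t,s].\<close>
definition AchvSitAux ::
  "('a \<Rightarrow> 'a sit \<Rightarrow> bool) \<Rightarrow> ('a \<Rightarrow> real) \<Rightarrow> real \<Rightarrow> 'a sit \<Rightarrow> (real \<Rightarrow> 'a sit \<Rightarrow> bool) \<Rightarrow> 'a sit \<Rightarrow> bool" where
  "AchvSitAux Poss tm st0 s\<phi> \<phi> s \<longleftrightarrow>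
     sle Poss tm st0 s\<phi> s \<and>
     \<phi> (send st0 tm s\<phi> s) s\<phi> \<and>
     (\<forall>s' t. slt Poss tm st0 s\<phi> s' \<and> sle Poss tm st0 s' s \<and>
             start st0 tm s' \<le> t \<and> t \<le> send st0 tm s' s \<longrightarrow> \<phi> t s')"

definition AchvSit ::
  "('a \<Rightarrow> 'a sit \<Rightarrow> bool) \<Rightarrow> ('a \<Rightarrow> real) \<Rightarrow> real \<Rightarrow> 'a sit \<Rightarrow> (real \<Rightarrow> 'a sit \<Rightarrow> bool) \<Rightarrow> 'a sit \<Rightarrow> bool" where
  "AchvSit Poss tm st0 s\<phi> \<phi> s \<longleftrightarrow>
     AchvSitAux Poss tm st0 s\<phi> \<phi> s \<and>
     \<not> (\<exists>s''. slt Poss tm st0 s'' s\<phi> \<and> AchvSitAux Poss tm st0 s'' \<phi> s)"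

text \<open>CausesDir^prim_temp(a, ts, phi, s), where gamma i (i \<in> I) are the contexts of the
state evolution axiom of the temporal fluent f mentioned in phi.\<close>
definition CausesDirPrimTemp ::
  "('a \<Rightarrow> 'a sit \<Rightarrow> bool) \<Rightarrow> ('a \<Rightarrow> real) \<Rightarrow> real \<Rightarrow> 'i set \<Rightarrow> ('i \<Rightarrow> 'a sit \<Rightarrow> bool) \<Rightarrow>
   'a \<Rightarrow> nat \<Rightarrow> (real \<Rightarrow> 'a sit \<Rightarrow> bool) \<Rightarrow> 'a sit \<Rightarrow> bool" where
  "CausesDirPrimTemp Poss tm st0 I \<gamma> a ts \<phi> s \<longleftrightarrow>
     (\<exists>s\<phi>. AchvSit Poss tm st0 s\<phi> \<phi> s \<and> (\<exists>i\<in>I. CausesDir Poss tm st0 a ts (\<gamma> i) s\<phi>))"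

text \<open>State evolution axiom for the temporal fluent f (its object arguments fixed),
with contexts gamma i and value formulas delta i, i ranging over the finite set I.\<close>
definition StateEvolution ::
  "real \<Rightarrow> ('a \<Rightarrow> real) \<Rightarrow> 'i set \<Rightarrow> ('i \<Rightarrow> 'a sit \<Rightarrow> bool) \<Rightarrow>
   ('i \<Rightarrow> 'v \<Rightarrow> real \<Rightarrow> 'a sit \<Rightarrow> bool) \<Rightarrow> (real \<Rightarrow> 'a sit \<Rightarrow> 'v) \<Rightarrow> bool" where
  "StateEvolution st0 tm I \<gamma> \<delta> f \<longleftrightarrow>
     (\<forall>t s y. f t s = y \<longleftrightarrow>
        ((\<exists>i\<in>I. \<gamma> i s \<and> \<delta> i y t s) \<or>
         (y = f (start st0 tm s) s \<and> \<not> (\<exists>i\<in>I. \<gamma> i s))))"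

definition MutuallyExclusive :: "'i set \<Rightarrow> ('i \<Rightarrow> 'a sit \<Rightarrow> bool) \<Rightarrow> bool" where
  "MutuallyExclusive I \<gamma> \<longleftrightarrow> (\<forall>s. \<forall>i\<in>I. \<forall>j\<in>I. \<gamma> i s \<and> \<gamma> j s \<longrightarrow> i = j)"

text \<open>Hybrid temporal achievement causal setting <D, sigma, phi>, where
sigma = do([alpha_1,...,alpha_n], S0), n \<ge> 1.\<close>
definition AchvCausalSetting ::
  "('a \<Rightarrow> 'a sit \<Rightarrow> bool) \<Rightarrow> ('a \<Rightarrow> real) \<Rightarrow> real \<Rightarrow> 'a list \<Rightarrow> (real \<Rightarrow> 'a sit \<Rightarrow> bool) \<Rightarrow> bool" where
  "AchvCausalSetting Poss tm st0 \<alpha>s \<phi> \<longleftrightarrow>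
     length \<alpha>s \<ge> 1 \<and>
     Exec Poss tm st0 (do_list \<alpha>s S0) \<and>
     \<not> \<phi> (start st0 tm S0) S0 \<and>
     \<not> \<phi> (tm (hd \<alpha>s)) S0 \<and>
     \<phi> (start st0 tm (do_list \<alpha>s S0)) (do_list \<alpha>s S0)"

end

theory Submission
  imports Defs "HOL-Library.Sublist"
begin

(* Situations are action histories and every precedence relation of the calculus is the
   prefix order, restricted to executable situations.  Below an executable situation s the
   prefixes of s form a chain, so the earliest situation from which an effect persists until
   s is unique, and so is the earliest action after which a context persists until it.  At
   the achievement situation both contexts named by the two causes hold; mutual exclusion
   makes them the same context, and the uniqueness of its direct cause ends the proof. *)

lemma sprec_iff_strict_prefix: "sprec s s' \<longleftrightarrow> strict_prefix s s'"
  unfolding sprec_def strict_prefix_def prefix_def by auto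

lemma sprec_eq_iff_prefix: "sprec_eq s s' \<longleftrightarrow> prefix s s'"
  unfolding sprec_eq_def sprec_iff_strict_prefix strict_prefix_def by auto

lemma Exec_prefix:
  assumes "Exec Poss tm st0 s" and "prefix p s"
  shows "Exec Poss tm st0 p"
  using assms unfolding Exec_def sprec_eq_iff_prefix
  by (meson prefix_order.trans)

lemma slt_iff_strict_prefix:
  assumes "Exec Poss tm st0 s'"
  shows "slt Poss tm st0 s s' \<longleftrightarrow> strict_prefix s s'"
  using assms unfolding slt_def sprec_iff_strict_prefix by simp

lemma sle_imp_prefix: "sle Poss tm st0 s s' \<Longrightarrow> prefix s s'"
  unfolding sle_def slt_def sprec_iff_strict_prefix by auto

lemma sle_iff_prefix:
  assumes "Exec Poss tm st0 s'"
  shows "sle Poss tm st0 s s' \<longleftrightarrow> prefix s s'"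
  using assms unfolding sle_def slt_iff_strict_prefix[OF assms] strict_prefix_def by auto

lemma prefix_same_length_eq:
  assumes "prefix xs zs" and "prefix ys zs" and "length xs = length ys"
  shows "xs = ys"
  using assms prefix_length_prefix prefix_order.antisym by (metis order_refl)

lemma AchvSit_prefix: "AchvSit Poss tm st0 s\<phi> \<phi> s \<Longrightarrow> prefix s\<phi> s"
  unfolding AchvSit_def AchvSitAux_def by (blast intro: sle_imp_prefix)

lemma AchvSit_unique:
  assumes E: "Exec Poss tm st0 s"
    and x: "AchvSit Poss tm st0 x \<phi> s" and y: "AchvSit Poss tm st0 y \<phi> s"
  shows "x = y"
proof -
  have no_earlier: "\<not> strict_prefix u v"
    if u: "AchvSit Poss tm st0 u \<phi> s" and v: "AchvSit Poss tm st0 v \<phi> s" for u v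
  proof
    assume "strict_prefix u v"
    moreover have "prefix v s" using v by (rule AchvSit_prefix)
    ultimately have "slt Poss tm st0 u v"
      using slt_iff_strict_prefix Exec_prefix[OF E] by blast
    with u v show False unfolding AchvSit_def by blast
  qed
  have "prefix x s" "prefix y s" using AchvSit_prefix[OF x] AchvSit_prefix[OF y] .
  then have "prefix x y \<or> prefix y x" by (rule prefix_same_cases)
  with no_earlier[OF x y] no_earlier[OF y x] show "x = y"
    unfolding strict_prefix_def by blast
qed

lemma CausesDir_holds: "CausesDir Poss tm st0 a ts \<psi> s \<Longrightarrow> \<psi> s"
  unfolding CausesDir_def sle_def by blast

lemma CausesDir_witness_length_le:
  assumes E: "Exec Poss tm st0 s"
    and persist: "\<forall>s'. sle Poss tm st0 (do a1 sa1) s' \<and> sle Poss tm st0 s' s \<longrightarrow> \<psi> s'"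
    and le1: "sle Poss tm st0 (do a1 sa1) s"
    and le2: "sle Poss tm st0 (do a2 sa2) s" and not_\<psi>: "\<not> \<psi> sa2"
  shows "length sa2 \<le> length sa1"
proof (rule ccontr)
  assume "\<not> length sa2 \<le> length sa1"
  then have longer: "length (sa1 @ [a1]) \<le> length sa2" by simp
  have p1: "prefix (sa1 @ [a1]) s" and p2: "prefix (sa2 @ [a2]) s"
    using le1 le2 sle_imp_prefix unfolding do_def by blast+
  have "prefix (sa1 @ [a1]) (sa2 @ [a2])"
    using prefix_length_prefix[OF p1 p2] longer by simp
  with longer have "prefix (do a1 sa1) sa2"
    unfolding do_def by auto
  moreover have "prefix sa2 s"
    using p2 prefixI prefix_order.trans by blast
  moreover have "Exec Poss tm st0 sa2"
    using E \<open>prefix sa2 s\<close> by (rule Exec_prefix)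
  ultimately have "sle Poss tm st0 (do a1 sa1) sa2" "sle Poss tm st0 sa2 s"
    using sle_iff_prefix E by blast+
  with persist not_\<psi> show False by blast
qed

lemma CausesDir_unique:
  assumes E: "Exec Poss tm st0 s"
    and C1: "CausesDir Poss tm st0 a1 ts1 \<psi> s" and C2: "CausesDir Poss tm st0 a2 ts2 \<psi> s"
  shows "a1 = a2 \<and> ts1 = ts2"
proof -
  obtain sa1 where sa1: "timeStamp sa1 = ts1" "sle Poss tm st0 (do a1 sa1) s" "\<not> \<psi> sa1"
      "\<forall>s'. sle Poss tm st0 (do a1 sa1) s' \<and> sle Poss tm st0 s' s \<longrightarrow> \<psi> s'"
    using C1 unfolding CausesDir_def by blast
  obtain sa2 where sa2: "timeStamp sa2 = ts2" "sle Poss tm st0 (do a2 sa2) s" "\<not> \<psi> sa2"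
      "\<forall>s'. sle Poss tm st0 (do a2 sa2) s' \<and> sle Poss tm st0 s' s \<longrightarrow> \<psi> s'"
    using C2 unfolding CausesDir_def by blast
  have "length sa2 \<le> length sa1"
    using CausesDir_witness_length_le[OF E sa1(4) sa1(2) sa2(2) sa2(3)] .
  moreover have "length sa1 \<le> length sa2"
    using CausesDir_witness_length_le[OF E sa2(4) sa2(2) sa1(2) sa1(3)] .
  moreover have "prefix (sa1 @ [a1]) s" "prefix (sa2 @ [a2]) s"
    using sa1(2) sa2(2) sle_imp_prefix unfolding do_def by blast+
  ultimately have "sa1 @ [a1] = sa2 @ [a2]"
    using prefix_same_length_eq[of "sa1 @ [a1]" s "sa2 @ [a2]"] by simp
  with sa1(1) sa2(1) show ?thesis by simp
qed

lemma CausesDirPrimTemp_unique: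
  assumes E: "Exec Poss tm st0 s" and mex: "MutuallyExclusive I \<gamma>"
    and C1: "CausesDirPrimTemp Poss tm st0 I \<gamma> a1 ts1 \<phi> s"
    and C2: "CausesDirPrimTemp Poss tm st0 I \<gamma> a2 ts2 \<phi> s"
  shows "a1 = a2 \<and> ts1 = ts2"
proof -
  obtain x i1 where x: "AchvSit Poss tm st0 x \<phi> s" "i1 \<in> I"
      "CausesDir Poss tm st0 a1 ts1 (\<gamma> i1) x"
    using C1 unfolding CausesDirPrimTemp_def by blast
  obtain y i2 where y: "AchvSit Poss tm st0 y \<phi> s" "i2 \<in> I"
      "CausesDir Poss tm st0 a2 ts2 (\<gamma> i2) y"
    using C2 unfolding CausesDirPrimTemp_def by blast
  have "x = y" using AchvSit_unique[OF E x(1) y(1)] .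
  have "\<gamma> i1 x" "\<gamma> i2 x"
    using CausesDir_holds[OF x(3)] CausesDir_holds[OF y(3)] \<open>x = y\<close> by simp_all
  with mex x(2) y(2) have "i1 = i2" unfolding MutuallyExclusive_def by blast
  with y(3) \<open>x = y\<close> have C2': "CausesDir Poss tm st0 a2 ts2 (\<gamma> i1) x" by simp
  have "prefix x s" using x(1) by (rule AchvSit_prefix)
  with E have "Exec Poss tm st0 x" by (rule Exec_prefix)
  then show ?thesis using x(3) C2' by (rule CausesDir_unique)
qed

theorem theorem5p3:
  fixes Poss :: "'a \<Rightarrow> 'a list \<Rightarrow> bool" and tm :: "'a \<Rightarrow> real" and st0 :: real
    and I :: "'i set" and \<gamma> :: "'i \<Rightarrow> 'a list \<Rightarrow> bool"
    and \<delta> :: "'i \<Rightarrow> 'v \<Rightarrow> real \<Rightarrow> 'a list \<Rightarrow> bool"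
    and f :: "real \<Rightarrow> 'a list \<Rightarrow> 'v" and \<Phi> :: "'v \<Rightarrow> bool"
    and \<alpha>s :: "'a list"
  assumes finI: "finite I"
    and sea: "StateEvolution st0 tm I \<gamma> \<delta> f"
    and mex: "MutuallyExclusive I \<gamma>"
    and setting: "AchvCausalSetting Poss tm st0 \<alpha>s (\<lambda>t s. \<Phi> (f t s))"
  shows "\<forall>a1 ts1 a2 ts2.
           CausesDirPrimTemp Poss tm st0 I \<gamma> a1 ts1 (\<lambda>t s. \<Phi> (f t s)) (do_list \<alpha>s S0) \<and>
           CausesDirPrimTemp Poss tm st0 I \<gamma> a2 ts2 (\<lambda>t s. \<Phi> (f t s)) (do_list \<alpha>s S0)
           \<longrightarrow> a1 = a2 \<and> ts1 = ts2"
proof (intro allI impI)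
  fix a1 ts1 a2 ts2
  assume causes: "CausesDirPrimTemp Poss tm st0 I \<gamma> a1 ts1 (\<lambda>t s. \<Phi> (f t s)) (do_list \<alpha>s S0) \<and>
    CausesDirPrimTemp Poss tm st0 I \<gamma> a2 ts2 (\<lambda>t s. \<Phi> (f t s)) (do_list \<alpha>s S0)"
  have "Exec Poss tm st0 (do_list \<alpha>s S0)"
    using setting unfolding AchvCausalSetting_def by blast
  then show "a1 = a2 \<and> ts1 = ts2"
    using mex causes[THEN conjunct1] causes[THEN conjunct2] by (rule CausesDirPrimTemp_unique)
qed

end
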